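(* Let $n\ge1$ and $\bar S=\{s_1<s_2<\cdots<s_k\}\subseteq[n-1]$ (possibly empty, $k\ge0$), and put $s_0=0$, $s_{k+1}=n$. Let $\hat\alpha_n^-(\bar S)$ be the number of $\sigma\in\mathcal B_n$ with $\sigma(1)<0$ and $\hat D_B(\sigma)\subseteq\bar S$. Then $$\hat\alpha_n^-(\bar S)=\binom{n}{s_1-s_0,\,s_2-s_1,\,\dots,\,s_{k+1}-s_k}\cdot S_{s_1-s_0}\cdot\prod_{j=2}^{k+1}2^{\,s_j-s_{j-1}}E_{s_j-s_{j-1}}.$$
   Context: $\mathcal B_n$ is the set of signed permutations (bijections $\sigma$ of $\{\pm1,\dots,\pm n\}$ with $\sigma(-i)=-\sigma(i)$), written as words $\sigma(1)\cdots\sigma(n)$ with $\sigma(0)=0$. $\hat D_B(\sigma)$ is the set of $i\in\{0\}\cup[n-1]$ such that either $\sigma(i)<\sigma(i+1)$ and $i$ is even, or $\sigma(i)>\sigma(i+1)$ and $i$ is odd. $E_m$ is the Euler number: the number of permutations $\tau\in\mathfrak S_m$ with $\tau(1)>\tau(2)<\tau(3)>\tau(4)<\cdots$ (so $\sum_{m\ge0}E_m x^m/m!=\tan x+\sec x$); the number of such down-up alternating signed permutations in $\mathcal B_m$ is $2^mE_m$. $S_m$ (number of snakes) is the number of $\tau\in\mathcal B_m$ with $\tau(1)>\tau(2)<\tau(3)>\cdots$ and $\tau(1)>0$. The multinomial coefficient is $\binom{n}{\gamma_1,\dots,\gamma_l}=n!/(\gamma_1!\cdots\gamma_l!)$. 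*)

theory Defs
  imports "HOL-Combinatorics.Combinatorics"
begin

text \<open>Signed permutations of [n]: bijections of {-n..n}-{0} with sigma(-i) = -sigma(i),
  extended by the identity outside (so sigma 0 = 0 as in the paper).\<close>
definition signed_perms :: "nat \<Rightarrow> (int \<Rightarrow> int) set" where
  "signed_perms n = {\<sigma>. bij_betw \<sigma> ({- int n..int n} - {0}) ({- int n..int n} - {0})
      \<and> (\<forall>i. \<sigma> (- i) = - \<sigma> i)
      \<and> (\<forall>i. i \<notin> {- int n..int n} - {0} \<longrightarrow> \<sigma> i = i)}"

definition DB_hat :: "nat \<Rightarrow> (int \<Rightarrow> int) \<Rightarrow> nat set" where
  "DB_hat n \<sigma> = {i \<in> {0..<n}. (\<sigma> (int i) < \<sigma> (int i + 1) \<and> even i)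
                               \<or> (\<sigma> (int i) > \<sigma> (int i + 1) \<and> odd i)}"

definition down_up :: "nat \<Rightarrow> (int \<Rightarrow> int) \<Rightarrow> bool" where
  "down_up m \<tau> = (\<forall>i\<in>{1..<m}. (odd i \<longrightarrow> \<tau> (int i) > \<tau> (int i + 1))
                              \<and> (even i \<longrightarrow> \<tau> (int i) < \<tau> (int i + 1)))"

definition euler_num :: "nat \<Rightarrow> nat" where
  "euler_num m = card {\<tau> :: int \<Rightarrow> int. \<tau> permutes {1..int m} \<and> down_up m \<tau>}"

definition snake_num :: "nat \<Rightarrow> nat" where
  "snake_num m = card {\<tau> \<in> signed_perms m. down_up m \<tau> \<and> \<tau> 1 > 0}"

definition multinomial :: "nat \<Rightarrow> nat list \<Rightarrow> nat" where
  "multinomial n gs = fact n div (\<Prod>g\<leftarrow>gs. fact g)"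

end

theory Submission
  imports Defs
begin

text \<open>Read \<open>\<sigma> \<in> \<B>\<^sub>n\<close> as the signed word \<open>\<sigma>(1)\<dots>\<sigma>(n)\<close>. The condition
  \<open>\<sigma>(1) < 0 \<and> D\<^sub>B(\<sigma>) \<subseteq> S\<close> says that the word starts with a negative letter and zigzags
  (ascent at odd, descent at even positions) at every position outside \<open>S\<close>. Cutting the word
  after the largest element \<open>s\<close> of \<open>S\<close> leaves two independent conditions: the first \<open>s\<close>
  letters satisfy the same condition for \<open>S - {s}\<close>, the last \<open>n - s\<close> letters form an arbitrary
  zigzag signed word. Both conditions only depend on the relative order of the letters (and on
  their signs), so after choosing the \<open>s\<close> absolute values of the first part, in \<open>n choose s\<close>
  ways, each part may be relabelled onto \<open>{1..m}\<close>. Zigzag signed words of length \<open>m\<close> number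
  \<open>2\<^sup>m E\<^sub>m\<close> (fix the set of negated values, then relabel onto a permutation), and the empty
  \<open>S\<close> gives the snakes after negating all letters; induction on \<open>S\<close> yields the product.\<close>

lemma strict_mono_on_the_inv_into:
  fixes f :: "'a::linorder \<Rightarrow> 'b::linorder"
  assumes "bij_betw f A B" "strict_mono_on A f"
  shows "strict_mono_on B (the_inv_into A f)"
proof (rule strict_mono_onI)
  fix x y assume xy: "x \<in> B" "y \<in> B" "x < y"
  have inv: "the_inv_into A f x \<in> A" "the_inv_into A f y \<in> A"
    using xy bij_betw_the_inv_into[OF assms(1)] by (auto dest: bij_betwE)
  have "f (the_inv_into A f x) < f (the_inv_into A f y)"
    using xy assms(1) by (simp add: bij_betw_def f_the_inv_into_f)
  then show "the_inv_into A f x < the_inv_into A f y"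
    using strict_mono_on_less[OF assms(2) inv] by simp
qed

lemma strict_mono_on_nth_sorted_list_of_set:
  "strict_mono_on {..<card X} ((!) (sorted_list_of_set X))"
  by (rule strict_mono_onI)
     (auto intro: sorted_wrt_nth_less[OF sorted_list_of_set.strict_sorted_key_list_of_set])

lemma finite_sets_order_iso:
  fixes X :: "'a::linorder set" and Y :: "'b::linorder set"
  assumes "finite X" "finite Y" "card X = card Y"
  obtains \<phi> where "bij_betw \<phi> X Y" "strict_mono_on X \<phi>"
proof
  define hX where "hX = (!) (sorted_list_of_set X)"
  define hY where "hY = (!) (sorted_list_of_set Y)"
  have bX: "bij_betw hX {..<card X} X" and bY: "bij_betw hY {..<card X} Y"
    unfolding hX_def hY_def using assms by (auto intro: bij_betw_nth)
  have iX: "bij_betw (the_inv_into {..<card X} hX) X {..<card X}"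
    by (rule bij_betw_the_inv_into[OF bX])
  show "bij_betw (hY \<circ> the_inv_into {..<card X} hX) X Y"
    by (rule bij_betw_trans[OF iX bY])
  show "strict_mono_on X (hY \<circ> the_inv_into {..<card X} hX)"
    using strict_mono_on_nth_sorted_list_of_set[of Y] strict_mono_on_nth_sorted_list_of_set[of X]
      strict_mono_on_the_inv_into[OF bX] iX assms(3)
    unfolding hX_def hY_def by (intro monotone_on_o) (auto simp: bij_betw_def)
qed

definition signed_words :: "int set \<Rightarrow> int list set" where
  "signed_words X = {w. distinct (map abs w) \<and> set (map abs w) = X}"

lemma length_signed_words: "w \<in> signed_words X \<Longrightarrow> length w = card X"
  unfolding signed_words_def using distinct_card[of "map abs w"] by simp

lemma set_signed_words: "w \<in> signed_words X \<Longrightarrow> set w \<subseteq> X \<union> uminus ` X"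
proof
  fix x assume "w \<in> signed_words X" "x \<in> set w"
  then have "\<bar>x\<bar> \<in> X" unfolding signed_words_def by auto
  then show "x \<in> X \<union> uminus ` X"
    by (cases "x \<ge> 0") (auto intro: rev_image_eqI[of "- x"])
qed

lemma finite_signed_words: "finite X \<Longrightarrow> finite (signed_words X)"
  by (rule finite_subset[OF _ finite_lists_length_eq[of "X \<union> uminus ` X" "card X"]])
     (use set_signed_words length_signed_words in auto)

lemma card_permutations_of_set_order_iso:
  fixes V V' :: "'a::linorder set"
  assumes "finite V" "finite V'" "card V = card V'"
    and P: "\<And>(g :: 'a \<Rightarrow> 'a) w. strict_mono_on (set w) g \<Longrightarrow> P (map g w) = P w"
  shows "card {w \<in> permutations_of_set V. P w} = card {w \<in> permutations_of_set V'. P w}"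
proof -
  obtain \<phi> where \<phi>: "bij_betw \<phi> V V'" "strict_mono_on V \<phi>"
    using finite_sets_order_iso assms(1-3) by blast
  have "permutations_of_set V' = map \<phi> ` permutations_of_set V"
    using permutations_of_set_image_inj[of \<phi> V] \<phi>(1) by (simp add: bij_betw_def)
  moreover have "P (map \<phi> w) = P w" if "w \<in> permutations_of_set V" for w
    using P monotone_on_subset[OF \<phi>(2)] permutations_of_setD(1)[OF that] by blast
  ultimately have "{w \<in> permutations_of_set V'. P w} = map \<phi> ` {w \<in> permutations_of_set V. P w}"
    by auto
  moreover have "inj_on (map \<phi>) {w \<in> permutations_of_set V. P w}"
    using \<phi>(1) unfolding permutations_of_set_def bij_betw_def
    by (intro inj_onI) (simp add: inj_on_map_eq_map)
  ultimately show ?thesis by (simp add: card_image)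
qed

definition odd_ext :: "(int \<Rightarrow> int) \<Rightarrow> int \<Rightarrow> int" where
  "odd_ext \<phi> x = (if x > 0 then \<phi> x else if x < 0 then - \<phi> (- x) else 0)"

lemma strict_mono_on_odd_ext:
  assumes mono: "strict_mono_on X \<phi>" and "X \<subseteq> {0<..}" "\<phi> ` X \<subseteq> {0<..}"
  shows "strict_mono_on (X \<union> uminus ` X \<union> {0}) (odd_ext \<phi>)"
proof (rule strict_mono_onI)
  fix x y assume x: "x \<in> X \<union> uminus ` X \<union> {0}" and y: "y \<in> X \<union> uminus ` X \<union> {0}" and "x < y"
  have pos: "a > 0" "\<phi> a > 0" if "a \<in> X" for a using that assms(2,3) by auto
  from x consider "x \<in> X" | "- x \<in> X" "x < 0" | "x = 0" using pos by force
  then show "odd_ext \<phi> x < odd_ext \<phi> y"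
  proof cases
    case 1
    then have "y \<in> X" using y \<open>x < y\<close> pos(1)[OF 1] by (force dest: pos(1))
    then show ?thesis using 1 \<open>x < y\<close> pos strict_mono_onD[OF mono] by (auto simp: odd_ext_def)
  next
    case 2
    then have ox: "odd_ext \<phi> x = - \<phi> (- x)" "\<phi> (- x) > 0" using pos by (auto simp: odd_ext_def)
    from y consider "y \<in> X" | "- y \<in> X" "y < 0" | "y = 0" using pos by force
    then show ?thesis
    proof cases
      case 1
      then show ?thesis using ox pos[OF 1] by (simp add: odd_ext_def)
    next
      case 2
      then show ?thesis using ox \<open>- x \<in> X\<close> \<open>x < y\<close> strict_mono_onD[OF mono, of "- y" "- x"]
        by (simp add: odd_ext_def)
    next
      case 3
      then show ?thesis using ox by (simp add: odd_ext_def)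
    qed
  next
    case 3
    then have "y \<in> X" using y \<open>x < y\<close> by (auto dest: pos(1))
    then show ?thesis using 3 pos by (auto simp: odd_ext_def)
  qed
qed

lemma abs_odd_ext: "x \<noteq> 0 \<Longrightarrow> 0 \<le> \<phi> \<bar>x\<bar> \<Longrightarrow> \<bar>odd_ext \<phi> x\<bar> = \<phi> \<bar>x\<bar>"
  by (cases "x > 0") (auto simp: odd_ext_def)

lemma map_odd_ext_in_signed_words:
  assumes "bij_betw \<phi> A B" "A \<subseteq> {0<..}" "B \<subseteq> {0<..}" and w: "w \<in> signed_words A"
  shows "map (odd_ext \<phi>) w \<in> signed_words B"
proof -
  have "\<bar>odd_ext \<phi> x\<bar> = \<phi> \<bar>x\<bar>" if "\<bar>x\<bar> \<in> A" for x
    using that assms(2,3) bij_betw_apply[OF assms(1) that] by (intro abs_odd_ext) auto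
  then have "map abs (map (odd_ext \<phi>) w) = map \<phi> (map abs w)"
    using w unfolding signed_words_def by force
  then show ?thesis
    using w assms(1) unfolding signed_words_def mem_Collect_eq
    by (metis bij_betw_def distinct_map list.set_map)
qed

lemma card_signed_words_le_order_iso:
  assumes "finite B" "A \<subseteq> {0<..}" "B \<subseteq> {0<..}" "bij_betw \<phi> A B" "strict_mono_on A \<phi>"
    and P: "\<And>(g :: int \<Rightarrow> int) w. strict_mono_on (insert 0 (set w)) g \<Longrightarrow> g 0 = 0 \<Longrightarrow>
      P (map g w) = P w"
  shows "card {w \<in> signed_words A. P w} \<le> card {w \<in> signed_words B. P w}"
proof (rule card_inj_on_le)
  let ?\<chi> = "odd_ext \<phi>"
  have mono: "strict_mono_on (A \<union> uminus ` A \<union> {0}) ?\<chi>"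
    using strict_mono_on_odd_ext[OF assms(5)] assms(2,3,4) by (auto simp: bij_betw_def)
  show "finite {w \<in> signed_words B. P w}" using finite_signed_words[OF assms(1)] by auto
  show "inj_on (map ?\<chi>) {w \<in> signed_words A. P w}"
  proof (rule inj_onI)
    fix u v assume "u \<in> {w \<in> signed_words A. P w}" "v \<in> {w \<in> signed_words A. P w}"
      and eq: "map ?\<chi> u = map ?\<chi> v"
    then have "set u \<union> set v \<subseteq> A \<union> uminus ` A \<union> {0}" using set_signed_words by blast
    then have "inj_on ?\<chi> (set u \<union> set v)"
      by (rule inj_on_subset[OF strict_mono_on_imp_inj_on[OF mono]])
    then show "u = v" using eq by (simp add: inj_on_map_eq_map)
  qed
  show "map ?\<chi> ` {w \<in> signed_words A. P w} \<subseteq> {w \<in> signed_words B. P w}"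
  proof clarify
    fix w assume w: "w \<in> signed_words A" "P w"
    have "strict_mono_on (insert 0 (set w)) ?\<chi>"
      by (rule monotone_on_subset[OF mono]) (use set_signed_words[OF w(1)] in blast)
    then have "P (map ?\<chi> w)" using P w(2) by (simp add: odd_ext_def)
    then show "map ?\<chi> w \<in> signed_words B \<and> P (map ?\<chi> w)"
      using map_odd_ext_in_signed_words[OF assms(4,2,3) w(1)] by blast
  qed
qed

lemma card_signed_words_order_iso:
  assumes "finite X" "finite Y" "card X = card Y" "X \<subseteq> {0<..}" "Y \<subseteq> {0<..}"
    and P: "\<And>(g :: int \<Rightarrow> int) w. strict_mono_on (insert 0 (set w)) g \<Longrightarrow> g 0 = 0 \<Longrightarrow>
      P (map g w) = P w"
  shows "card {w \<in> signed_words X. P w} = card {w \<in> signed_words Y. P w}"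
proof (rule antisym)
  obtain \<phi> where "bij_betw \<phi> X Y" "strict_mono_on X \<phi>"
    using finite_sets_order_iso assms(1-3) by blast
  then show "card {w \<in> signed_words X. P w} \<le> card {w \<in> signed_words Y. P w}"
    using card_signed_words_le_order_iso[OF assms(2) assms(4,5) _ _ P] by blast
  obtain \<psi> where "bij_betw \<psi> Y X" "strict_mono_on Y \<psi>"
    using finite_sets_order_iso assms(1-3) by metis
  then show "card {w \<in> signed_words Y. P w} \<le> card {w \<in> signed_words X. P w}"
    using card_signed_words_le_order_iso[OF assms(1) assms(5,4) _ _ P] by blast
qed

text \<open>The letters of the signed words on \<open>X\<close> whose negative letters have absolute values \<open>N\<close>.\<close>

definition sign_flip :: "int set \<Rightarrow> int set \<Rightarrow> int set" where
  "sign_flip X N = uminus ` N \<union> (X - N)"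

lemma mem_sign_flip:
  assumes "X \<subseteq> {0<..}" "N \<subseteq> X"
  shows "a \<in> sign_flip X N \<longleftrightarrow> (a < 0 \<and> - a \<in> N) \<or> (0 < a \<and> a \<in> X - N)"
proof -
  have "a \<in> uminus ` N \<longleftrightarrow> - a \<in> N" by (auto intro: rev_image_eqI[of "- a"])
  then show ?thesis unfolding sign_flip_def
    using subsetD[OF assms(1), of a] subsetD[OF assms(1) subsetD[OF assms(2)], of "- a"] by auto
qed

lemma inj_on_sign_flip:
  assumes pos: "X \<subseteq> {0<..}"
  shows "inj_on (sign_flip X) (Pow X)"
proof (rule inj_onI)
  fix N N' assume N: "N \<in> Pow X" "N' \<in> Pow X" and eq: "sign_flip X N = sign_flip X N'"
  have recover: "M = {x \<in> X. - x \<in> sign_flip X M}" if "M \<subseteq> X" for M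
  proof -
    have "x \<in> M \<longleftrightarrow> - x \<in> sign_flip X M" if "x \<in> X" for x
      using mem_sign_flip[OF pos \<open>M \<subseteq> X\<close>, of "- x"] subsetD[OF pos that] by simp
    then show ?thesis using \<open>M \<subseteq> X\<close> by blast
  qed
  show "N = N'" using recover[of N] recover[of N'] N eq by simp
qed

lemma card_sign_flip:
  assumes "finite X" "X \<subseteq> {0<..}" "N \<subseteq> X"
  shows "card (sign_flip X N) = card X"
proof -
  have "finite N" using finite_subset[OF assms(3,1)] .
  have False if "n \<in> N" "- n \<in> X" for n
    using subsetD[OF assms(2) subsetD[OF assms(3) that(1)]] subsetD[OF assms(2) that(2)] by simp
  then have "uminus ` N \<inter> (X - N) = {}" by blast
  then have "card (sign_flip X N) = card (uminus ` N) + card (X - N)"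
    unfolding sign_flip_def using \<open>finite N\<close> assms(1) by (intro card_Un_disjoint) auto
  also have "card (uminus ` N) = card N" by (rule card_image) (simp add: inj_on_def)
  finally show ?thesis using assms by (simp add: card_Diff_subset card_mono finite_subset)
qed

lemma set_signed_word_eq_sign_flip:
  assumes pos: "X \<subseteq> {0<..}" and w: "w \<in> signed_words X"
  shows "set w = sign_flip X {x \<in> X. - x \<in> set w}"
proof -
  define N where "N = {x \<in> X. - x \<in> set w}"
  have inj: "inj_on abs (set w)" and absw: "abs ` set w = X"
    using w unfolding signed_words_def by (simp_all add: distinct_map)
  have "y \<in> set w \<longleftrightarrow> (y < 0 \<and> - y \<in> N) \<or> (0 < y \<and> y \<in> X - N)" for y
  proof
    assume y: "y \<in> set w"
    then have "\<bar>y\<bar> \<in> X" using absw by blast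
    then have "\<bar>y\<bar> > 0" using pos by blast
    show "(y < 0 \<and> - y \<in> N) \<or> (0 < y \<and> y \<in> X - N)"
    proof (cases "y < 0")
      case True
      then show ?thesis using \<open>\<bar>y\<bar> \<in> X\<close> y unfolding N_def by simp
    next
      case False
      have "- y \<notin> set w"
      proof
        assume "- y \<in> set w"
        then have "- y = y" using inj_onD[OF inj _ _ y, of "- y"] by simp
        then show False using False \<open>\<bar>y\<bar> > 0\<close> by simp
      qed
      then show ?thesis using False \<open>\<bar>y\<bar> \<in> X\<close> \<open>\<bar>y\<bar> > 0\<close> unfolding N_def by simp
    qed
  next
    assume "(y < 0 \<and> - y \<in> N) \<or> (0 < y \<and> y \<in> X - N)"
    then consider "- y \<in> N" | "y \<in> X" "y \<notin> N" by blast
    then show "y \<in> set w"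
    proof cases
      case 1
      then show ?thesis unfolding N_def by simp
    next
      case 2
      then obtain x where x: "x \<in> set w" "\<bar>x\<bar> = y" using absw by blast
      then have "x = y \<or> x = - y" by (simp add: abs_eq_iff')
      then show ?thesis using x 2 unfolding N_def by auto
    qed
  qed
  moreover have "N \<subseteq> X" unfolding N_def by blast
  ultimately have "set w = sign_flip X N" by (simp add: set_eq_iff mem_sign_flip[OF pos])
  then show ?thesis unfolding N_def .
qed

lemma sign_flip_permutations_subset_signed_words:
  assumes pos: "X \<subseteq> {0<..}" and N: "N \<subseteq> X"
  shows "permutations_of_set (sign_flip X N) \<subseteq> signed_words X"
proof
  fix w assume "w \<in> permutations_of_set (sign_flip X N)"
  then have "distinct w" and setw: "set w = sign_flip X N" by (simp_all add: permutations_of_set_def)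
  note mem = mem_sign_flip[OF pos N]
  have "inj_on abs (sign_flip X N)"
  proof (rule inj_onI)
    fix x y assume "x \<in> sign_flip X N" "y \<in> sign_flip X N" "\<bar>x\<bar> = \<bar>y\<bar>"
    then show "x = y" unfolding mem abs_eq_iff by auto
  qed
  moreover have "abs ` sign_flip X N = X"
  proof (intro equalityI subsetI)
    fix y assume "y \<in> abs ` sign_flip X N"
    then obtain x where "x \<in> sign_flip X N" "y = \<bar>x\<bar>" by blast
    then show "y \<in> X" unfolding mem using N by auto
  next
    fix y assume "y \<in> X"
    then have "y > 0" using pos by auto
    show "y \<in> abs ` sign_flip X N"
    proof (cases "y \<in> N")
      case True
      then have "- y \<in> sign_flip X N" using mem[of "- y"] \<open>y > 0\<close> by simp
      then show ?thesis by (rule rev_image_eqI) (use \<open>y > 0\<close> in simp)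
    next
      case False
      then have "y \<in> sign_flip X N" using mem[of y] \<open>y > 0\<close> \<open>y \<in> X\<close> by simp
      then show ?thesis by (rule rev_image_eqI) (use \<open>y > 0\<close> in simp)
    qed
  qed
  ultimately show "w \<in> signed_words X"
    using \<open>distinct w\<close> setw unfolding signed_words_def by (simp add: distinct_map)
qed

lemma signed_words_eq_UN_permutations_of_set:
  assumes "X \<subseteq> {0<..}"
  shows "signed_words X = (\<Union>N \<in> Pow X. permutations_of_set (sign_flip X N))"
proof (intro equalityI subsetI)
  fix w assume w: "w \<in> signed_words X"
  then have "distinct w" unfolding signed_words_def by (simp add: distinct_map)
  with set_signed_word_eq_sign_flip[OF assms w]
  have "w \<in> permutations_of_set (sign_flip X {x \<in> X. - x \<in> set w})"
    by (rule permutations_of_setI)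
  moreover have "{x \<in> X. - x \<in> set w} \<in> Pow X" by blast
  ultimately show "w \<in> (\<Union>N \<in> Pow X. permutations_of_set (sign_flip X N))" by (rule UN_I[rotated])
next
  fix w assume "w \<in> (\<Union>N \<in> Pow X. permutations_of_set (sign_flip X N))"
  then obtain N where "N \<subseteq> X" "w \<in> permutations_of_set (sign_flip X N)" by blast
  then show "w \<in> signed_words X" using sign_flip_permutations_subset_signed_words[OF assms] by blast
qed

lemma card_signed_words_eq_pow2_card_permutations:
  assumes "finite X" "X \<subseteq> {0<..}"
    and P: "\<And>(g :: int \<Rightarrow> int) w. strict_mono_on (set w) g \<Longrightarrow> P (map g w) = P w"
  shows "card {w \<in> signed_words X. P w} = 2 ^ card X * card {w \<in> permutations_of_set X. P w}"
proof -
  have "{w \<in> signed_words X. P w} = (\<Union>N \<in> Pow X. {w \<in> permutations_of_set (sign_flip X N). P w})"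
    unfolding signed_words_eq_UN_permutations_of_set[OF assms(2)] by auto
  also have "card \<dots> = (\<Sum>N \<in> Pow X. card {w \<in> permutations_of_set (sign_flip X N). P w})"
  proof (rule card_UN_disjoint)
    show "finite (Pow X)" using assms(1) by simp
    show "\<forall>N \<in> Pow X. finite {w \<in> permutations_of_set (sign_flip X N). P w}" by simp
    show "\<forall>N \<in> Pow X. \<forall>N' \<in> Pow X. N \<noteq> N' \<longrightarrow>
        {w \<in> permutations_of_set (sign_flip X N). P w} \<inter> {w \<in> permutations_of_set (sign_flip X N'). P w} = {}"
    proof (intro ballI impI)
      fix N N' assume "N \<in> Pow X" "N' \<in> Pow X" "N \<noteq> N'"
      then have "sign_flip X N \<noteq> sign_flip X N'"
        using inj_on_sign_flip[OF assms(2)] unfolding inj_on_def by blast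
      then show "{w \<in> permutations_of_set (sign_flip X N). P w} \<inter> {w \<in> permutations_of_set (sign_flip X N'). P w} = {}"
        using permutations_of_setD(1) by blast
    qed
  qed
  also have "\<dots> = (\<Sum>N \<in> Pow X. card {w \<in> permutations_of_set X. P w})"
  proof (rule sum.cong[OF refl])
    fix N assume "N \<in> Pow X"
    then have "N \<subseteq> X" by simp
    then have "finite (sign_flip X N)"
      unfolding sign_flip_def using finite_subset[OF \<open>N \<subseteq> X\<close> assms(1)] assms(1) by simp
    moreover have "card (sign_flip X N) = card X" by (rule card_sign_flip[OF assms(1,2) \<open>N \<subseteq> X\<close>])
    ultimately show "card {w \<in> permutations_of_set (sign_flip X N). P w} = card {w \<in> permutations_of_set X. P w}"
      using card_permutations_of_set_order_iso[OF _ assms(1) _ P] by blast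
  qed
  also have "\<dots> = 2 ^ card X * card {w \<in> permutations_of_set X. P w}"
    using assms(1) by (simp add: card_Pow)
  finally show ?thesis .
qed

text \<open>For \<open>w = \<sigma>(1)\<dots>\<sigma>(n)\<close>, phase 0 with \<open>T = S\<close> is \<open>D\<^sub>B(\<sigma>) \<subseteq> S\<close> away from position 0,
  and phase 1 with \<open>T = {}\<close> is down-up.\<close>

definition zigzag_off :: "nat \<Rightarrow> nat set \<Rightarrow> 'a::linorder list \<Rightarrow> bool" where
  "zigzag_off p T w \<longleftrightarrow> (\<forall>j. 0 < j \<longrightarrow> j < length w \<longrightarrow> p + j \<notin> T \<longrightarrow>
       (if odd (p + j) then w ! (j - 1) < w ! j else w ! j < w ! (j - 1)))"

lemma zigzag_offD:
  "zigzag_off p T w \<Longrightarrow> 0 < j \<Longrightarrow> j < length w \<Longrightarrow> p + j \<notin> T \<Longrightarrow>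
    (if odd (p + j) then w ! (j - 1) < w ! j else w ! j < w ! (j - 1))"
  unfolding zigzag_off_def by blast

lemma zigzag_off_map_strict_mono:
  assumes "strict_mono_on (set w) g"
  shows "zigzag_off p T (map g w) \<longleftrightarrow> zigzag_off p T w"
proof -
  have "(g (w ! (j - 1)) < g (w ! j) \<longleftrightarrow> w ! (j - 1) < w ! j)
      \<and> (g (w ! j) < g (w ! (j - 1)) \<longleftrightarrow> w ! j < w ! (j - 1))" if "j < length w" for j
    using strict_mono_on_less[OF assms] that by simp
  then show ?thesis unfolding zigzag_off_def by simp
qed

lemma zigzag_off_map_uminus:
  fixes w :: "'a::linordered_ab_group_add list"
  shows "zigzag_off p {} (map uminus w) \<longleftrightarrow> zigzag_off (Suc p) {} w"
  unfolding zigzag_off_def by auto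

lemma zigzag_off_parity: "even p \<longleftrightarrow> even q \<Longrightarrow> zigzag_off p {} w \<longleftrightarrow> zigzag_off q {} w"
  unfolding zigzag_off_def by simp

lemma zigzag_off_appendD:
  assumes len: "length u = s" and T: "T \<subseteq> {..<s}" and uv: "zigzag_off 0 (insert s T) (u @ v)"
  shows "zigzag_off 0 T u" "zigzag_off s {} v"
proof -
  show "zigzag_off 0 T u" unfolding zigzag_off_def
  proof (intro allI impI)
    fix j assume j: "0 < j" "j < length u" "0 + j \<notin> T"
    have "j - 1 < length u" using j by simp
    have "if odd (0 + j) then (u @ v) ! (j - 1) < (u @ v) ! j else (u @ v) ! j < (u @ v) ! (j - 1)"
      using zigzag_offD[OF uv, of j] j len by simp
    then show "if odd (0 + j) then u ! (j - 1) < u ! j else u ! j < u ! (j - 1)"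
      unfolding nth_append_left[OF \<open>j - 1 < length u\<close>] nth_append_left[OF \<open>j < length u\<close>] .
  qed
  show "zigzag_off s {} v" unfolding zigzag_off_def
  proof (intro allI impI)
    fix j assume j: "0 < j" "j < length v" "s + j \<notin> {}"
    then have "s + j \<notin> insert s T" using T by auto
    then have "if odd (s + j) then (u @ v) ! (s + j - 1) < (u @ v) ! (s + j)
        else (u @ v) ! (s + j) < (u @ v) ! (s + j - 1)"
      using zigzag_offD[OF uv, of "s + j"] j len by simp
    moreover have e: "(u @ v) ! (s + j - 1) = v ! (j - 1)" "(u @ v) ! (s + j) = v ! j"
      using j len by (auto simp: nth_append)
    ultimately show "if odd (s + j) then v ! (j - 1) < v ! j else v ! j < v ! (j - 1)"
      unfolding e by simp
  qed
qed

lemma zigzag_off_appendI: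
  assumes len: "length u = s" and u: "zigzag_off 0 T u" and v: "zigzag_off s {} v"
  shows "zigzag_off 0 (insert s T) (u @ v)"
  unfolding zigzag_off_def
proof (intro allI impI)
  fix j assume j: "0 < j" "j < length (u @ v)" "0 + j \<notin> insert s T"
  show "if odd (0 + j) then (u @ v) ! (j - 1) < (u @ v) ! j else (u @ v) ! j < (u @ v) ! (j - 1)"
  proof (cases "j < s")
    case True
    then have "j - 1 < length u" "j < length u" using len by simp_all
    then show ?thesis
      unfolding nth_append_left[OF \<open>j - 1 < length u\<close>] nth_append_left[OF \<open>j < length u\<close>]
      using zigzag_offD[OF u, of j] j by simp
  next
    case False
    define k where "k = j - s"
    have k: "j = s + k" "0 < k" "k < length v" using False j len unfolding k_def by auto
    then have "if odd (s + k) then v ! (k - 1) < v ! k else v ! k < v ! (k - 1)"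
      using zigzag_offD[OF v, of k] by simp
    moreover have e: "(u @ v) ! (j - 1) = v ! (k - 1)" "(u @ v) ! j = v ! k"
      using k len by (auto simp: nth_append)
    ultimately show ?thesis unfolding e using k by simp
  qed
qed

lemma zigzag_off_append:
  assumes "length u = s" "T \<subseteq> {..<s}"
  shows "zigzag_off 0 (insert s T) (u @ v) \<longleftrightarrow> zigzag_off 0 T u \<and> zigzag_off s {} v"
  using zigzag_off_appendD[OF assms] zigzag_off_appendI[OF assms(1)] by blast

lemma card_Collect_bij_betw:
  assumes "bij_betw f A B"
  shows "card {x \<in> A. Q (f x)} = card {y \<in> B. Q y}"
proof (rule bij_betw_same_card)
  show "bij_betw f {x \<in> A. Q (f x)} {y \<in> B. Q y}"
    using assms unfolding bij_betw_def by (auto intro: inj_on_subset)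
qed

definition sperm_word :: "nat \<Rightarrow> (int \<Rightarrow> int) \<Rightarrow> int list" where
  "sperm_word n \<sigma> = map (\<lambda>i. \<sigma> (int i)) [1..<Suc n]"

lemma length_sperm_word [simp]: "length (sperm_word n \<sigma>) = n"
  by (simp add: sperm_word_def)

lemma nth_sperm_word [simp]: "j < n \<Longrightarrow> sperm_word n \<sigma> ! j = \<sigma> (int j + 1)"
  by (simp add: sperm_word_def add.commute del: upt_Suc)

lemma nth_sperm_word_pred: "0 < j \<Longrightarrow> j \<le> n \<Longrightarrow> sperm_word n \<sigma> ! (j - 1) = \<sigma> (int j)"
  using nth_sperm_word[of "j - 1" n \<sigma>] by (simp add: of_nat_diff)

lemma signed_permsD:
  assumes "\<sigma> \<in> signed_perms n"
  shows "bij_betw \<sigma> ({- int n..int n} - {0}) ({- int n..int n} - {0})"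
    and "\<sigma> (- i) = - \<sigma> i" and "i \<notin> {- int n..int n} - {0} \<Longrightarrow> \<sigma> i = i"
  using assms unfolding signed_perms_def by auto

lemma sperm_word_in_signed_words:
  assumes \<sigma>: "\<sigma> \<in> signed_perms n"
  shows "sperm_word n \<sigma> \<in> signed_words {1..int n}"
proof -
  let ?D = "{- int n..int n} - {0}"
  have inj: "inj_on \<sigma> ?D" and im: "\<sigma> ` ?D = ?D"
    using signed_permsD(1)[OF \<sigma>] by (auto simp: bij_betw_def)
  have "distinct (map abs (sperm_word n \<sigma>))"
    unfolding distinct_conv_nth
  proof (intro allI impI)
    fix i j assume ij: "i < length (map abs (sperm_word n \<sigma>))" "j < length (map abs (sperm_word n \<sigma>))" "i \<noteq> j"
    show "map abs (sperm_word n \<sigma>) ! i \<noteq> map abs (sperm_word n \<sigma>) ! j"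
    proof
      assume "map abs (sperm_word n \<sigma>) ! i = map abs (sperm_word n \<sigma>) ! j"
      then have "\<sigma> (int i + 1) = \<sigma> (int j + 1) \<or> \<sigma> (int i + 1) = \<sigma> (- (int j + 1))"
        using ij signed_permsD(2)[OF \<sigma>, of "int j + 1"] by (simp add: abs_eq_iff)
      moreover have "int i + 1 \<in> ?D" "int j + 1 \<in> ?D" "- (int j + 1) \<in> ?D" using ij by auto
      ultimately have "int i + 1 = int j + 1 \<or> int i + 1 = - (int j + 1)"
        using inj by (meson inj_onD)
      then show False using ij(3) by auto
    qed
  qed
  moreover have "set (map abs (sperm_word n \<sigma>)) = {1..int n}"
  proof
    show "set (map abs (sperm_word n \<sigma>)) \<subseteq> {1..int n}"
    proof
      fix y assume "y \<in> set (map abs (sperm_word n \<sigma>))"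
      then obtain j where j: "j < n" "y = \<bar>\<sigma> (int j + 1)\<bar>" by (auto simp: in_set_conv_nth)
      then have "\<sigma> (int j + 1) \<in> ?D" using im by auto
      then show "y \<in> {1..int n}" using j by auto
    qed
    show "{1..int n} \<subseteq> set (map abs (sperm_word n \<sigma>))"
    proof
      fix k assume k: "k \<in> {1..int n}"
      then have "k \<in> \<sigma> ` ?D" using im by auto
      then obtain i where i: "i \<in> ?D" "\<sigma> i = k" by blast
      have "\<bar>\<sigma> \<bar>i\<bar>\<bar> = k" using i k signed_permsD(2)[OF \<sigma>, of i] by (cases "i \<ge> 0") auto
      moreover have "nat \<bar>i\<bar> - 1 < n" "int (nat \<bar>i\<bar> - 1) + 1 = \<bar>i\<bar>" using i by auto
      ultimately have "map abs (sperm_word n \<sigma>) ! (nat \<bar>i\<bar> - 1) = k" by simp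
      then show "k \<in> set (map abs (sperm_word n \<sigma>))" using \<open>nat \<bar>i\<bar> - 1 < n\<close> by (metis length_map length_sperm_word nth_mem)
    qed
  qed
  ultimately show ?thesis unfolding signed_words_def by auto
qed

definition sperm_of_word :: "nat \<Rightarrow> int list \<Rightarrow> int \<Rightarrow> int" where
  "sperm_of_word n w i = (if 1 \<le> i \<and> i \<le> int n then w ! (nat i - 1)
     else if - int n \<le> i \<and> i \<le> -1 then - (w ! (nat (- i) - 1)) else i)"

lemma bij_betw_sperm_of_word:
  assumes w: "w \<in> signed_words {1..int n}"
  shows "bij_betw (sperm_of_word n w) ({- int n..int n} - {0}) ({- int n..int n} - {0})"
proof -
  let ?D = "{- int n..int n} - {0}"
  let ?\<sigma> = "sperm_of_word n w"
  have dab: "distinct (map abs w)" and sab: "set (map abs w) = {1..int n}"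
    using w unfolding signed_words_def by auto
  have len: "length w = n" using length_signed_words[OF w] by simp
  have rng: "\<bar>w ! k\<bar> \<in> {1..int n}" if "k < n" for k
  proof -
    have "map abs w ! k \<in> set (map abs w)" using that len by (intro nth_mem) simp
    then show ?thesis using that len unfolding sab by simp
  qed
  have abs_inj: "a = b" if "a < n" "b < n" "\<bar>w ! a\<bar> = \<bar>w ! b\<bar>" for a b
    using nth_eq_iff_index_eq[OF dab] that len by simp
  have into: "?\<sigma> ` ?D \<subseteq> ?D"
  proof
    fix y assume "y \<in> ?\<sigma> ` ?D"
    then obtain i where i: "i \<in> ?D" "y = ?\<sigma> i" by blast
    show "y \<in> ?D"
    proof (cases "i > 0")
      case True
      then have "y = w ! (nat i - 1)" "nat i - 1 < n" using i unfolding sperm_of_word_def by auto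
      then show ?thesis using rng[of "nat i - 1"] by (cases "w ! (nat i - 1) \<ge> 0") auto
    next
      case False
      then have "y = - w ! (nat (-i) - 1)" "nat (-i) - 1 < n" using i unfolding sperm_of_word_def by auto
      then show ?thesis using rng[of "nat (-i) - 1"] by (cases "w ! (nat (-i) - 1) \<ge> 0") auto
    qed
  qed
  have inj: "inj_on ?\<sigma> ?D"
  proof (rule inj_onI)
    fix x y assume x: "x \<in> ?D" and y: "y \<in> ?D" and e: "?\<sigma> x = ?\<sigma> y"
    define a where "a = nat \<bar>x\<bar> - 1"
    define b where "b = nat \<bar>y\<bar> - 1"
    have ab: "a < n" "b < n" using x y unfolding a_def b_def by auto
    have ex: "?\<sigma> x = (if x > 0 then w ! a else - w ! a)" using x unfolding sperm_of_word_def a_def by auto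
    have ey: "?\<sigma> y = (if y > 0 then w ! b else - w ! b)" using y unfolding sperm_of_word_def b_def by auto
    have "\<bar>w ! a\<bar> = \<bar>w ! b\<bar>" using e ex ey by (auto split: if_splits)
    then have "a = b" using abs_inj ab by blast
    then have xy: "\<bar>x\<bar> = \<bar>y\<bar>" using x y unfolding a_def b_def by auto
    have "w ! a \<noteq> 0" using rng[OF ab(1)] by auto
    then show "x = y" using e ex ey xy \<open>a = b\<close> x y by (auto split: if_splits)
  qed
  have "?\<sigma> ` ?D = ?D" using endo_inj_surj[OF _ into inj] by auto
  then show ?thesis using inj by (simp add: bij_betw_def)
qed

lemma sperm_of_word:
  assumes w: "w \<in> signed_words {1..int n}"
  shows "sperm_of_word n w \<in> signed_perms n" "sperm_word n (sperm_of_word n w) = w"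
proof -
  show "sperm_of_word n w \<in> signed_perms n"
    using bij_betw_sperm_of_word[OF w] unfolding signed_perms_def sperm_of_word_def by auto
  have "length w = n" using length_signed_words[OF w] by simp
  then show "sperm_word n (sperm_of_word n w) = w"
    by (intro nth_equalityI) (auto simp: sperm_of_word_def nat_add_distrib)
qed

lemma sperm_word_inj:
  assumes "\<sigma> \<in> signed_perms n" "\<tau> \<in> signed_perms n" "sperm_word n \<sigma> = sperm_word n \<tau>"
  shows "\<sigma> = \<tau>"
proof
  fix i
  have pos: "\<sigma> k = \<tau> k" if "1 \<le> k" "k \<le> int n" for k
    using arg_cong[OF assms(3), of "\<lambda>w. w ! (nat k - 1)"] that by simp
  show "\<sigma> i = \<tau> i"
  proof (cases "i \<in> {- int n..int n} - {0}")
    case True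
    then show ?thesis using pos[of i] pos[of "- i"] signed_permsD(2)[OF assms(1), of "- i"]
        signed_permsD(2)[OF assms(2), of "- i"]
      by (cases "i > 0") auto
  next
    case False
    then show ?thesis using signed_permsD(3)[OF assms(1)] signed_permsD(3)[OF assms(2)] by auto
  qed
qed

lemma bij_betw_sperm_word: "bij_betw (sperm_word n) (signed_perms n) (signed_words {1..int n})"
proof (rule bij_betw_imageI)
  show "inj_on (sperm_word n) (signed_perms n)" using sperm_word_inj by (meson inj_onI)
  show "sperm_word n ` signed_perms n = signed_words {1..int n}"
    using sperm_word_in_signed_words sperm_of_word by (metis image_eqI image_subsetI subsetI subset_antisym)
qed

lemma down_up_iff_zigzag_off: "down_up m \<tau> \<longleftrightarrow> zigzag_off 1 {} (sperm_word m \<tau>)"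
  unfolding down_up_def zigzag_off_def length_sperm_word
proof (intro iffI allI impI ballI)
  fix j assume A: "\<forall>i\<in>{1..<m}. (odd i \<longrightarrow> \<tau> (int i + 1) < \<tau> (int i)) \<and> (even i \<longrightarrow> \<tau> (int i) < \<tau> (int i + 1))"
    and j: "0 < j" "j < m" "1 + j \<notin> {}"
  then show "if odd (1 + j) then sperm_word m \<tau> ! (j - 1) < sperm_word m \<tau> ! j
      else sperm_word m \<tau> ! j < sperm_word m \<tau> ! (j - 1)"
    using A[rule_format, of j] nth_sperm_word_pred[of j m \<tau>] nth_sperm_word[of j m \<tau>] by auto
next
  fix i assume B: "\<forall>j. 0 < j \<longrightarrow> j < m \<longrightarrow> 1 + j \<notin> {} \<longrightarrow>
      (if odd (1 + j) then sperm_word m \<tau> ! (j - 1) < sperm_word m \<tau> ! j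
       else sperm_word m \<tau> ! j < sperm_word m \<tau> ! (j - 1))" and i: "i \<in> {1..<m}"
  then show "(odd i \<longrightarrow> \<tau> (int i + 1) < \<tau> (int i)) \<and> (even i \<longrightarrow> \<tau> (int i) < \<tau> (int i + 1))"
    using B[rule_format, of i] nth_sperm_word_pred[of i m \<tau>] nth_sperm_word[of i m \<tau>] by auto
qed

definition perm_of_word :: "nat \<Rightarrow> int list \<Rightarrow> int \<Rightarrow> int" where
  "perm_of_word m w i = (if i \<in> {1..int m} then w ! (nat i - 1) else i)"

lemma perm_of_word:
  assumes w: "w \<in> permutations_of_set {1..int m}"
  shows "perm_of_word m w permutes {1..int m}" "sperm_word m (perm_of_word m w) = w"
proof -
  let ?\<tau> = "perm_of_word m w"
  have len: "length w = m" using w by (simp add: length_finite_permutations_of_set)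
  have into: "?\<tau> ` {1..int m} \<subseteq> {1..int m}"
  proof
    fix y assume "y \<in> ?\<tau> ` {1..int m}"
    then obtain i where i: "i \<in> {1..int m}" "y = w ! (nat i - 1)" unfolding perm_of_word_def by auto
    then have "nat i - 1 < length w" using len by auto
    then show "y \<in> {1..int m}" using i permutations_of_setD(1)[OF w] by (metis nth_mem)
  qed
  have "inj_on ?\<tau> {1..int m}"
  proof (rule inj_onI)
    fix x y assume x: "x \<in> {1..int m}" and y: "y \<in> {1..int m}" and "?\<tau> x = ?\<tau> y"
    then have "w ! (nat x - 1) = w ! (nat y - 1)" unfolding perm_of_word_def by simp
    then have "nat x - 1 = nat y - 1"
      using nth_eq_iff_index_eq[OF permutations_of_setD(2)[OF w]] x y len by auto
    then show "x = y" using x y by auto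
  qed
  then have "bij_betw ?\<tau> {1..int m} {1..int m}"
    using endo_inj_surj[OF _ into] by (simp add: bij_betw_def)
  then show "?\<tau> permutes {1..int m}"
    by (rule bij_imp_permutes) (simp only: perm_of_word_def if_False)
  show "sperm_word m ?\<tau> = w"
    by (rule nth_equalityI) (auto simp: len perm_of_word_def nat_add_distrib)
qed

lemma bij_betw_sperm_word_permutes:
  "bij_betw (sperm_word m) {\<tau>. \<tau> permutes {1..int m}} (permutations_of_set {1..int m})"
proof (rule bij_betw_imageI)
  show "inj_on (sperm_word m) {\<tau>. \<tau> permutes {1..int m}}"
  proof (rule inj_onI, rule ext)
    fix \<sigma> \<tau> i assume \<sigma>: "\<sigma> \<in> {\<tau>. \<tau> permutes {1..int m}}" and \<tau>: "\<tau> \<in> {\<tau>. \<tau> permutes {1..int m}}"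
      and eq: "sperm_word m \<sigma> = sperm_word m \<tau>"
    show "\<sigma> i = \<tau> i"
    proof (cases "i \<in> {1..int m}")
      case True
      then have "nat i - 1 < m" "int (nat i - 1) + 1 = i" by auto
      then show ?thesis using arg_cong[OF eq, of "\<lambda>w. w ! (nat i - 1)"] by simp
    next
      case False
      then show ?thesis using \<sigma> \<tau> by (simp add: permutes_not_in)
    qed
  qed
  have base: "map int [1..<Suc m] \<in> permutations_of_set {1..int m}"
    by (intro permutations_of_setI)
       (simp_all only: set_map set_upt atLeastLessThanSuc_atLeastAtMost image_int_atLeastAtMost
         of_nat_1 distinct_map distinct_upt inj_on_of_nat simp_thms)
  show "sperm_word m ` {\<tau>. \<tau> permutes {1..int m}} = permutations_of_set {1..int m}"
  proof (intro equalityI subsetI)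
    fix w assume "w \<in> sperm_word m ` {\<tau>. \<tau> permutes {1..int m}}"
    then obtain \<tau> where \<tau>: "\<tau> permutes {1..int m}" and w: "w = sperm_word m \<tau>" by blast
    have "w = map \<tau> (map int [1..<Suc m])" unfolding w by (simp only: sperm_word_def map_map comp_def)
    then have "w \<in> map \<tau> ` permutations_of_set {1..int m}" using base by (rule image_eqI)
    then show "w \<in> permutations_of_set {1..int m}" by (simp only: permutations_of_set_image_permutes[OF \<tau>])
  next
    fix w assume "w \<in> permutations_of_set {1..int m}"
    from perm_of_word[OF this] show "w \<in> sperm_word m ` {\<tau>. \<tau> permutes {1..int m}}"
      by (intro image_eqI[of w _ "perm_of_word m w"]) simp_all
  qed
qed

lemma euler_num_eq_card_zigzag_words:
  "euler_num m = card {w \<in> permutations_of_set {1..int m}. zigzag_off 1 {} w}"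
  unfolding euler_num_def down_up_iff_zigzag_off
  using card_Collect_bij_betw[OF bij_betw_sperm_word_permutes, where Q = "zigzag_off 1 {}"] by simp

lemma bij_betw_map_uminus_signed_words: "bij_betw (map uminus) (signed_words X) (signed_words X)"
  by (rule bij_betw_byWitness[where f' = "map uminus"]) (auto simp: signed_words_def comp_def image_image)

lemma card_signed_zigzag_words:
  "card {w \<in> signed_words {1..int m}. zigzag_off p {} w} = 2 ^ m * euler_num m"
proof -
  have "card {w \<in> signed_words {1..int m}. zigzag_off 1 {} w}
      = 2 ^ card {1..int m} * card {w \<in> permutations_of_set {1..int m}. zigzag_off 1 {} w}"
    by (rule card_signed_words_eq_pow2_card_permutations) (auto simp: zigzag_off_map_strict_mono)
  then have odd_phase: "card {w \<in> signed_words {1..int m}. zigzag_off 1 {} w} = 2 ^ m * euler_num m"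
    by (simp add: euler_num_eq_card_zigzag_words)
  show ?thesis
  proof (cases "even p")
    case True
    have "zigzag_off p {} w \<longleftrightarrow> zigzag_off 1 {} (map uminus w)" for w :: "int list"
      using True zigzag_off_parity[of p "Suc (Suc 0)" w] zigzag_off_map_uminus[of 1 w] by simp
    then have "card {w \<in> signed_words {1..int m}. zigzag_off p {} w}
        = card {w \<in> signed_words {1..int m}. zigzag_off 1 {} (map uminus w)}" by simp
    also have "\<dots> = card {w \<in> signed_words {1..int m}. zigzag_off 1 {} w}"
      by (rule card_Collect_bij_betw[OF bij_betw_map_uminus_signed_words])
    finally show ?thesis using odd_phase by simp
  next
    case False
    then have "zigzag_off p {} w \<longleftrightarrow> zigzag_off 1 {} w" for w :: "int list"
      using zigzag_off_parity[of p 1 w] by simp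
    then show ?thesis using odd_phase by simp
  qed
qed

lemma snake_num_eq_card_signed_words:
  assumes "m \<ge> 1"
  shows "snake_num m = card {w \<in> signed_words {1..int m}. w ! 0 < 0 \<and> zigzag_off 0 {} w}"
proof -
  let ?Q = "\<lambda>w. w ! 0 > 0 \<and> zigzag_off 1 {} w"
  have "snake_num m = card {\<tau> \<in> signed_perms m. ?Q (sperm_word m \<tau>)}"
    unfolding snake_num_def down_up_iff_zigzag_off using assms by (simp add: conj_commute)
  also have "\<dots> = card {w \<in> signed_words {1..int m}. ?Q w}"
    by (rule card_Collect_bij_betw[OF bij_betw_sperm_word])
  also have "\<dots> = card {w \<in> signed_words {1..int m}. ?Q (map uminus w)}"
    by (rule card_Collect_bij_betw[OF bij_betw_map_uminus_signed_words, symmetric])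
  also have "{w \<in> signed_words {1..int m}. ?Q (map uminus w)}
      = {w \<in> signed_words {1..int m}. w ! 0 < 0 \<and> zigzag_off 0 {} w}"
  proof (rule Collect_cong)
    fix w
    have "w \<in> signed_words {1..int m} \<Longrightarrow> map uminus w ! 0 = - (w ! 0)"
      using assms by (simp add: length_signed_words)
    moreover have "zigzag_off 1 {} (map uminus w) \<longleftrightarrow> zigzag_off 0 {} w"
      using zigzag_off_parity[of "Suc (Suc 0)" 0 w] by (simp add: zigzag_off_map_uminus)
    ultimately show "w \<in> signed_words {1..int m} \<and> ?Q (map uminus w)
        \<longleftrightarrow> w \<in> signed_words {1..int m} \<and> w ! 0 < 0 \<and> zigzag_off 0 {} w"
      by auto
  qed
  finally show ?thesis .
qed

lemma signed_perm_step_neq: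
  assumes "\<sigma> \<in> signed_perms n" "j < n"
  shows "\<sigma> (int j) \<noteq> \<sigma> (int j + 1)"
proof
  let ?D = "{- int n..int n} - {0}"
  assume eq: "\<sigma> (int j) = \<sigma> (int j + 1)"
  have "int j + 1 \<in> ?D" using assms(2) by auto
  then have "\<sigma> (int j + 1) \<in> ?D" using bij_betwE[OF signed_permsD(1)[OF assms(1)]] by blast
  show False
  proof (cases "j = 0")
    case True
    then show False using eq signed_permsD(3)[OF assms(1), of 0] \<open>\<sigma> (int j + 1) \<in> ?D\<close> by simp
  next
    case False
    then have "int j \<in> ?D" using assms(2) by auto
    then show False
      using inj_onD[OF bij_betw_imp_inj_on[OF signed_permsD(1)[OF assms(1)]] eq] \<open>int j + 1 \<in> ?D\<close>
      by simp
  qed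
qed

lemma DB_hat_subset_iff_zigzag_off:
  assumes \<sigma>: "\<sigma> \<in> signed_perms n" and "n \<ge> 1" and S: "S \<subseteq> {1..n-1}"
  shows "\<sigma> 1 < 0 \<and> DB_hat n \<sigma> \<subseteq> S \<longleftrightarrow>
    sperm_word n \<sigma> ! 0 < 0 \<and> zigzag_off 0 S (sperm_word n \<sigma>)"
proof -
  let ?w = "sperm_word n \<sigma>"
  have "\<sigma> 0 = 0" using signed_permsD(3)[OF \<sigma>, of 0] by simp
  then have zero: "0 \<in> DB_hat n \<sigma> \<longleftrightarrow> \<not> \<sigma> 1 < 0"
    using signed_perm_step_neq[OF \<sigma>, of 0] \<open>n \<ge> 1\<close> unfolding DB_hat_def by auto
  have step: "j \<in> DB_hat n \<sigma> \<longleftrightarrow>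
      \<not> (if odd (0 + j) then ?w ! (j - 1) < ?w ! j else ?w ! j < ?w ! (j - 1))" if "0 < j" "j < n" for j
    using that signed_perm_step_neq[OF \<sigma>, of j] unfolding DB_hat_def
    by (auto simp: nth_sperm_word_pred)
  have "DB_hat n \<sigma> \<subseteq> S \<longleftrightarrow> 0 \<notin> DB_hat n \<sigma> \<and> (\<forall>j. 0 < j \<longrightarrow> j < n \<longrightarrow> j \<notin> S \<longrightarrow> j \<notin> DB_hat n \<sigma>)"
  proof
    assume "DB_hat n \<sigma> \<subseteq> S"
    then show "0 \<notin> DB_hat n \<sigma> \<and> (\<forall>j. 0 < j \<longrightarrow> j < n \<longrightarrow> j \<notin> S \<longrightarrow> j \<notin> DB_hat n \<sigma>)"
      using S by auto
  next
    assume R: "0 \<notin> DB_hat n \<sigma> \<and> (\<forall>j. 0 < j \<longrightarrow> j < n \<longrightarrow> j \<notin> S \<longrightarrow> j \<notin> DB_hat n \<sigma>)"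
    show "DB_hat n \<sigma> \<subseteq> S"
    proof
      fix j assume "j \<in> DB_hat n \<sigma>"
      moreover have "j < n" using \<open>j \<in> DB_hat n \<sigma>\<close> unfolding DB_hat_def by simp
      ultimately show "j \<in> S" using R by (cases "j = 0") auto
    qed
  qed
  then show ?thesis using zero step \<open>n \<ge> 1\<close> unfolding zigzag_off_def by auto
qed

lemma append_in_signed_words:
  "u @ v \<in> signed_words U \<longleftrightarrow> set (map abs u) \<subseteq> U \<and>
    u \<in> signed_words (set (map abs u)) \<and> v \<in> signed_words (U - set (map abs u))"
  unfolding signed_words_def by auto

lemma mem_append_image_signed_words:
  assumes "A \<subseteq> U" "card A = s"
  shows "w \<in> (\<lambda>(u, v). u @ v) ` ({u \<in> signed_words A. P u} \<times> {v \<in> signed_words (U - A). Q v})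
    \<longleftrightarrow> w \<in> signed_words U \<and> P (take s w) \<and> Q (drop s w) \<and> set (map abs (take s w)) = A"
proof
  assume "w \<in> (\<lambda>(u, v). u @ v) ` ({u \<in> signed_words A. P u} \<times> {v \<in> signed_words (U - A). Q v})"
  then obtain u v where u: "u \<in> signed_words A" "P u" and v: "v \<in> signed_words (U - A)" "Q v"
    and w: "w = u @ v" by auto
  have "length u = s" using length_signed_words[OF u(1)] assms(2) by simp
  moreover have "set (map abs u) = A" using u(1) unfolding signed_words_def by simp
  ultimately show "w \<in> signed_words U \<and> P (take s w) \<and> Q (drop s w) \<and> set (map abs (take s w)) = A"
    using u v assms(1) unfolding w append_in_signed_words by simp
next
  assume w: "w \<in> signed_words U \<and> P (take s w) \<and> Q (drop s w) \<and> set (map abs (take s w)) = A"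
  then have "take s w \<in> signed_words A" "drop s w \<in> signed_words (U - A)"
    using append_in_signed_words[of "take s w" "drop s w" U] by simp_all
  then show "w \<in> (\<lambda>(u, v). u @ v) ` ({u \<in> signed_words A. P u} \<times> {v \<in> signed_words (U - A). Q v})"
    using w by (intro rev_image_eqI[of "(take s w, drop s w)"]) simp_all
qed

lemma card_append_image_signed_words:
  "card ((\<lambda>(u, v). u @ v) ` ({u \<in> signed_words A. P u} \<times> {v \<in> signed_words B. Q v}))
    = card {u \<in> signed_words A. P u} * card {v \<in> signed_words B. Q v}"
proof -
  have "inj_on (\<lambda>(u, v). u @ v) ({u \<in> signed_words A. P u} \<times> {v \<in> signed_words B. Q v})"
    by (auto simp: inj_on_def length_signed_words)
  then show ?thesis by (simp add: card_image card_cartesian_product)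
qed

lemma card_signed_words_split:
  assumes "finite U" "s \<le> card U"
  shows "card {w \<in> signed_words U. P (take s w) \<and> Q (drop s w)}
    = (\<Sum>A | A \<subseteq> U \<and> card A = s.
        card {u \<in> signed_words A. P u} * card {v \<in> signed_words (U - A). Q v})"
proof -
  let ?I = "{A. A \<subseteq> U \<and> card A = s}"
  define piece where "piece A = (\<lambda>(u, v). u @ v) `
      ({u \<in> signed_words A. P u} \<times> {v \<in> signed_words (U - A). Q v})" for A
  have piece_iff: "w \<in> piece A \<longleftrightarrow> w \<in> signed_words U \<and> P (take s w) \<and> Q (drop s w)
      \<and> set (map abs (take s w)) = A" if "A \<in> ?I" for A w
    using mem_append_image_signed_words[of A U s] that unfolding piece_def by simp
  have "{w \<in> signed_words U. P (take s w) \<and> Q (drop s w)} = (\<Union>A \<in> ?I. piece A)"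
  proof (intro equalityI subsetI)
    fix w assume w: "w \<in> {w \<in> signed_words U. P (take s w) \<and> Q (drop s w)}"
    define A where "A = set (map abs (take s w))"
    have "length (take s w) = s" using length_signed_words[of w U] w assms(2) by simp
    moreover have "distinct (map abs (take s w))" "A \<subseteq> U"
      using w append_in_signed_words[of "take s w" "drop s w" U]
      unfolding A_def signed_words_def by auto
    ultimately have "A \<in> ?I" unfolding A_def using distinct_card by fastforce
    moreover have "w \<in> piece A" using piece_iff[OF \<open>A \<in> ?I\<close>] w unfolding A_def by simp
    ultimately show "w \<in> (\<Union>A \<in> ?I. piece A)" by (rule UN_I)
  next
    fix w assume "w \<in> (\<Union>A \<in> ?I. piece A)"
    then obtain A where "A \<in> ?I" "w \<in> piece A" by (rule UN_E)
    then show "w \<in> {w \<in> signed_words U. P (take s w) \<and> Q (drop s w)}" using piece_iff by simp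
  qed
  then have "card {w \<in> signed_words U. P (take s w) \<and> Q (drop s w)} = (\<Sum>A \<in> ?I. card (piece A))"
  proof (simp only:, intro card_UN_disjoint)
    show "finite ?I" using assms(1) by simp
    show "\<forall>A \<in> ?I. finite (piece A)"
    proof
      fix A assume "A \<in> ?I"
      then have "finite A" using finite_subset[of A U] assms(1) by simp
      have "finite {u \<in> signed_words A. P u}"
        by (rule finite_subset[OF _ finite_signed_words[OF \<open>finite A\<close>]]) blast
      moreover have "finite {v \<in> signed_words (U - A). Q v}"
        by (rule finite_subset[OF _ finite_signed_words[of "U - A"]]) (use assms(1) in auto)
      ultimately show "finite (piece A)" unfolding piece_def by simp
    qed
    show "\<forall>A \<in> ?I. \<forall>B \<in> ?I. A \<noteq> B \<longrightarrow> piece A \<inter> piece B = {}"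
    proof (intro ballI impI)
      fix A B assume A: "A \<in> ?I" and B: "B \<in> ?I" and "A \<noteq> B"
      show "piece A \<inter> piece B = {}"
      proof (rule ccontr)
        assume "piece A \<inter> piece B \<noteq> {}"
        then obtain w where "w \<in> piece A" "w \<in> piece B" by blast
        then have "set (map abs (take s w)) = A" "set (map abs (take s w)) = B"
          using piece_iff[OF A] piece_iff[OF B] by simp_all
        then show False using \<open>A \<noteq> B\<close> by simp
      qed
    qed
  qed
  then show ?thesis unfolding piece_def card_append_image_signed_words by simp
qed

lemma neg_head_zigzag_off_map_strict_mono:
  fixes w :: "int list" and g :: "int \<Rightarrow> int"
  assumes "strict_mono_on (insert 0 (set w)) g" "g 0 = 0"
  shows "map g w ! 0 < 0 \<and> zigzag_off p T (map g w) \<longleftrightarrow> w ! 0 < 0 \<and> zigzag_off p T w"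
proof (cases w)
  case (Cons a r)
  have "g a < g 0 \<longleftrightarrow> a < 0" using strict_mono_on_less[OF assms(1)] Cons by simp
  moreover have "zigzag_off p T (map g w) \<longleftrightarrow> zigzag_off p T w"
    by (rule zigzag_off_map_strict_mono[OF monotone_on_subset[OF assms(1)]]) auto
  ultimately show ?thesis using Cons assms(2) by simp
next
  case Nil
  then show ?thesis by simp
qed

definition neg_zigzag_count :: "nat \<Rightarrow> nat set \<Rightarrow> nat" where
  "neg_zigzag_count n T = card {w \<in> signed_words {1..int n}. w ! 0 < 0 \<and> zigzag_off 0 T w}"

lemma card_zigzag_signed_words_positive:
  assumes "finite X" "X \<subseteq> {0<..}"
  shows "card {v \<in> signed_words X. zigzag_off p {} v} = 2 ^ card X * euler_num (card X)"
proof -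
  have "card {v \<in> signed_words X. zigzag_off p {} v}
      = card {v \<in> signed_words {1..int (card X)}. zigzag_off p {} v}"
  proof (rule card_signed_words_order_iso)
    fix g :: "int \<Rightarrow> int" and w assume "strict_mono_on (insert 0 (set w)) g"
    then show "zigzag_off p {} (map g w) \<longleftrightarrow> zigzag_off p {} w"
      using zigzag_off_map_strict_mono monotone_on_subset by blast
  qed (use assms in auto)
  then show ?thesis by (simp add: card_signed_zigzag_words)
qed

lemma card_neg_zigzag_signed_words_positive:
  assumes "finite X" "X \<subseteq> {0<..}"
  shows "card {u \<in> signed_words X. u ! 0 < 0 \<and> zigzag_off 0 T u} = neg_zigzag_count (card X) T"
  unfolding neg_zigzag_count_def
proof (rule card_signed_words_order_iso)
  fix g :: "int \<Rightarrow> int" and w assume "strict_mono_on (insert 0 (set w)) g" "g 0 = 0"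
  then show "map g w ! 0 < 0 \<and> zigzag_off 0 T (map g w) \<longleftrightarrow> w ! 0 < 0 \<and> zigzag_off 0 T w"
    by (rule neg_head_zigzag_off_map_strict_mono)
qed (use assms in auto)

lemma neg_zigzag_count_insert:
  assumes s: "0 < s" "s < n" and T: "T \<subseteq> {..<s}"
  shows "neg_zigzag_count n (insert s T)
    = (n choose s) * neg_zigzag_count s T * (2 ^ (n - s) * euler_num (n - s))"
proof -
  let ?U = "{1..int n}"
  let ?P = "\<lambda>u. u ! 0 < 0 \<and> zigzag_off 0 T u"
  let ?Q = "zigzag_off s {}"
  have split: "w ! 0 < 0 \<and> zigzag_off 0 (insert s T) w \<longleftrightarrow> ?P (take s w) \<and> ?Q (drop s w)"
    if "w \<in> signed_words ?U" for w
  proof -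
    have "length (take s w) = s" using length_signed_words[OF that] s by simp
    then show ?thesis using zigzag_off_append[of "take s w" s T "drop s w"] s T by simp
  qed
  have "neg_zigzag_count n (insert s T)
      = card {w \<in> signed_words ?U. ?P (take s w) \<and> ?Q (drop s w)}"
    unfolding neg_zigzag_count_def by (rule arg_cong[where f = card], rule Collect_cong) (use split in blast)
  also have "\<dots> = (\<Sum>A | A \<subseteq> ?U \<and> card A = s.
        card {u \<in> signed_words A. ?P u} * card {v \<in> signed_words (?U - A). ?Q v})"
    by (rule card_signed_words_split) (use s in auto)
  also have "\<dots> = (\<Sum>A | A \<subseteq> ?U \<and> card A = s. neg_zigzag_count s T * (2 ^ (n - s) * euler_num (n - s)))"
  proof (rule sum.cong[OF refl])
    fix A assume A: "A \<in> {A. A \<subseteq> ?U \<and> card A = s}"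
    then have "finite A" "A \<subseteq> {0<..}" using finite_subset[of A ?U] by auto
    moreover have "card (?U - A) = n - s" using A \<open>finite A\<close> by (simp add: card_Diff_subset)
    moreover have "?U - A \<subseteq> {0<..}" by auto
    ultimately show "card {u \<in> signed_words A. ?P u} * card {v \<in> signed_words (?U - A). ?Q v}
        = neg_zigzag_count s T * (2 ^ (n - s) * euler_num (n - s))"
      using A card_neg_zigzag_signed_words_positive[of A T]
        card_zigzag_signed_words_positive[of "?U - A" s] by auto
  qed
  also have "\<dots> = (n choose s) * neg_zigzag_count s T * (2 ^ (n - s) * euler_num (n - s))"
    using n_subsets[of ?U s] by simp
  finally show ?thesis .
qed

definition gaps :: "nat list \<Rightarrow> nat \<Rightarrow> nat list" where
  "gaps ss n = map2 (\<lambda>a b. a - b) (ss @ [n]) (0 # ss)"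

lemma gaps_Nil [simp]: "gaps [] n = [n]"
  by (simp add: gaps_def)

lemma gaps_snoc: "gaps (ss @ [s]) n = gaps ss s @ [n - s]"
proof -
  have "zip ((ss @ [s]) @ [n]) ((0 # ss) @ [s]) = zip (ss @ [s]) (0 # ss) @ zip [n] [s]"
    by (rule zip_append) simp
  then show ?thesis unfolding gaps_def by simp
qed

lemma sum_list_gaps: "sorted_wrt (<) ss \<Longrightarrow> \<forall>x \<in> set ss. x \<le> n \<Longrightarrow> sum_list (gaps ss n) = n"
proof (induction ss arbitrary: n rule: rev_induct)
  case (snoc s ss)
  have "sorted_wrt (<) ss" "\<forall>x \<in> set ss. x \<le> s"
    using snoc.prems(1) by (auto simp: sorted_wrt_append less_imp_le)
  then have "sum_list (gaps ss s) = s" by (rule snoc.IH)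
  then show ?case using snoc.prems by (simp add: gaps_snoc)
qed simp

lemma prod_fact_dvd_fact_sum_list: "(\<Prod>g \<leftarrow> d. fact g :: nat) dvd fact (sum_list d)"
proof (induction d)
  case (Cons a r)
  have "fact a * fact (sum_list r) * (sum_list (a # r) choose a) = (fact (sum_list (a # r)) :: nat)"
    using binomial_fact_lemma[of a "a + sum_list r"] by simp
  moreover have "fact a * (\<Prod>g \<leftarrow> r. fact g) dvd (fact a * fact (sum_list r) :: nat)"
    using Cons.IH by simp
  ultimately show ?case by (metis dvd_triv_left dvd_trans prod_list.Cons list.simps(9))
qed simp

lemma multinomial_snoc:
  assumes "sum_list d = s" "s \<le> n"
  shows "multinomial n (d @ [n - s]) = (n choose s) * multinomial s d"
proof -
  define P where "P = (\<Prod>g \<leftarrow> d. fact g :: nat)"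
  have "P dvd fact s" unfolding P_def using prod_fact_dvd_fact_sum_list[of d] assms by simp
  then have fs: "fact s = (fact s div P) * P" by simp
  have "P > 0" unfolding P_def by (induction d) auto
  have "fact n = (n choose s) * fact s * fact (n - s)"
    using binomial_fact_lemma[OF assms(2)] by (simp add: ac_simps)
  also have "\<dots> = ((n choose s) * (fact s div P)) * (P * fact (n - s))"
    by (subst fs) (simp add: ac_simps)
  finally show ?thesis using \<open>P > 0\<close> unfolding multinomial_def P_def by simp
qed

lemma neg_zigzag_count_sorted:
  assumes "sorted_wrt (<) ss" "set ss \<subseteq> {1..<n}" "n \<ge> 1"
  shows "neg_zigzag_count n (set ss)
    = multinomial n (gaps ss n) * snake_num (hd (gaps ss n)) * (\<Prod>g \<leftarrow> tl (gaps ss n). 2 ^ g * euler_num g)"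
  using assms
proof (induction ss arbitrary: n rule: rev_induct)
  case Nil
  then show ?case unfolding neg_zigzag_count_def multinomial_def
    by (simp add: snake_num_eq_card_signed_words)
next
  case (snoc s ss)
  have sorted: "sorted_wrt (<) ss" and below: "\<forall>x \<in> set ss. x < s"
    using snoc.prems(1) by (auto simp: sorted_wrt_append)
  have s: "0 < s" "s < n" using snoc.prems(2) by auto
  have "set ss \<subseteq> {1..<s}" using snoc.prems(2) below by auto
  have "gaps ss s \<noteq> []" by (simp add: gaps_def)
  have "sum_list (gaps ss s) = s" using sum_list_gaps[OF sorted] below by (simp add: less_imp_le)
  have insert: "neg_zigzag_count n (set (ss @ [s]))
      = (n choose s) * neg_zigzag_count s (set ss) * (2 ^ (n - s) * euler_num (n - s))"
    using neg_zigzag_count_insert[OF s, of "set ss"] below by auto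
  have IH: "neg_zigzag_count s (set ss) = multinomial s (gaps ss s) * snake_num (hd (gaps ss s))
      * (\<Prod>g \<leftarrow> tl (gaps ss s). 2 ^ g * euler_num g)"
    using snoc.IH[OF sorted \<open>set ss \<subseteq> {1..<s}\<close>] s by simp
  have multinomial: "multinomial n (gaps (ss @ [s]) n) = (n choose s) * multinomial s (gaps ss s)"
    unfolding gaps_snoc using multinomial_snoc[OF \<open>sum_list (gaps ss s) = s\<close>] s by simp
  have "hd (gaps (ss @ [s]) n) = hd (gaps ss s)" "tl (gaps (ss @ [s]) n) = tl (gaps ss s) @ [n - s]"
    using \<open>gaps ss s \<noteq> []\<close> by (simp_all add: gaps_snoc)
  then show ?case unfolding insert IH multinomial by (simp add: mult_ac)
qed

theorem lemma3p1:
  fixes n :: nat and S :: "nat set"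
  assumes "n \<ge> 1" and "S \<subseteq> {1..n-1}"
  shows "let ss = sorted_list_of_set S;
             d = map2 (\<lambda>a b. a - b) (ss @ [n]) (0 # ss)
         in card {\<sigma> \<in> signed_perms n. \<sigma> 1 < 0 \<and> DB_hat n \<sigma> \<subseteq> S}
            = multinomial n d * snake_num (hd d) * (\<Prod>g\<leftarrow>tl d. 2 ^ g * euler_num g)"
proof -
  define ss where "ss = sorted_list_of_set S"
  have "finite S" using finite_subset[OF assms(2)] by simp
  then have "set ss = S" "sorted_wrt (<) ss"
    unfolding ss_def by (simp_all add: sorted_list_of_set.strict_sorted_key_list_of_set)
  have "card {\<sigma> \<in> signed_perms n. \<sigma> 1 < 0 \<and> DB_hat n \<sigma> \<subseteq> S}
      = card {\<sigma> \<in> signed_perms n. sperm_word n \<sigma> ! 0 < 0 \<and> zigzag_off 0 S (sperm_word n \<sigma>)}"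
    by (intro arg_cong[where f = card] Collect_cong) (use DB_hat_subset_iff_zigzag_off[OF _ assms] in blast)
  also have "\<dots> = neg_zigzag_count n S"
    unfolding neg_zigzag_count_def by (rule card_Collect_bij_betw[OF bij_betw_sperm_word])
  also have "\<dots> = multinomial n (gaps ss n) * snake_num (hd (gaps ss n))
      * (\<Prod>g \<leftarrow> tl (gaps ss n). 2 ^ g * euler_num g)"
  proof -
    have "set ss \<subseteq> {1..<n}"
    proof
      fix x assume "x \<in> set ss"
      then have "x \<in> {1..n-1}" using assms(2) \<open>set ss = S\<close> by blast
      then show "x \<in> {1..<n}" using assms(1) by auto
    qed
    then show ?thesis using neg_zigzag_count_sorted[OF \<open>sorted_wrt (<) ss\<close> _ assms(1)] \<open>set ss = S\<close>
      by simp
  qed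
  finally show ?thesis unfolding Let_def gaps_def ss_def .
qed

end
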